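(* There is no $3$-dimensional Hopf superalgebra $A=A_0\oplus A_1$ over $\mathbb{K}$ with $A_1\neq 0$.
   Context: $\mathbb{K}$ is an algebraically closed field of characteristic $0$. A superalgebra is an associative unital $\mathbb{K}$-algebra $A=A_0\oplus A_1$ with a $\mathbb{Z}/2\mathbb{Z}$-grading such that $A_iA_j\subseteq A_{i+j}$ and $1\in A_0$; $|a|$ denotes the degree. $A\otimes A$ has product $(a\otimes b)(c\otimes d)=(-1)^{|b||c|}ac\otimes bd$. A superbialgebra is a superalgebra with even linear maps $\Delta:A\to A\otimes A$, $\varepsilon:A\to\mathbb{K}$ ($\mathbb{K}$ in degree $0$) which are coassociative and counital and are unital algebra homomorphisms. A Hopf superalgebra is a superbialgebra with an even linear map $S:A\to A$ satisfying $\mu\circ(S\otimes\mathrm{id})\circ\Delta=\mu\circ(\mathrm{id}\otimes S)\circ\Delta=\eta\circ\varepsilon$, where $\mu$ is the product and $\eta(\lambda)=\lambda1$. *)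

theory Defs
  imports "HOL-Computational_Algebra.Polynomial"
begin

definition alg_closed_field :: "'k::field itself \<Rightarrow> bool" where
  "alg_closed_field _ \<longleftrightarrow> (\<forall>p::'k poly. degree p > 0 \<longrightarrow> (\<exists>x. poly p x = 0))"

text \<open>A finite-dimensional Hopf superalgebra of dimension n, described by structure
constants with respect to a homogeneous basis e_0,...,e_(n-1) (every Z/2-graded
finite-dimensional space has one).  deg i in {0,1} is the parity of e_i.
  e_i e_j = sum_k m i j k e_k,      1 = sum_k u k e_k,
  Delta e_i = sum_(j,k) d i j k e_j (x) e_k,   eps e_i = c i,   S e_i = sum_j s i j e_j.
The product on A (x) A is (a(x)b)(c(x)d) = (-1)^(|b||c|) ac (x) bd.\<close>
definition hopf_superalgebra_sc ::
  "nat \<Rightarrow> (nat \<Rightarrow> nat) \<Rightarrow> (nat \<Rightarrow> nat \<Rightarrow> nat \<Rightarrow> 'k::field) \<Rightarrow> (nat \<Rightarrow> 'k)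
   \<Rightarrow> (nat \<Rightarrow> nat \<Rightarrow> nat \<Rightarrow> 'k) \<Rightarrow> (nat \<Rightarrow> 'k) \<Rightarrow> (nat \<Rightarrow> nat \<Rightarrow> 'k) \<Rightarrow> bool" where
  "hopf_superalgebra_sc n deg m u d c s \<longleftrightarrow>
     \<comment> \<open>grading and evenness of all structure maps\<close>
     (\<forall>i<n. deg i < 2) \<and>
     (\<forall>i<n. \<forall>j<n. \<forall>k<n. m i j k \<noteq> 0 \<longrightarrow> deg k = (deg i + deg j) mod 2) \<and>
     (\<forall>k<n. u k \<noteq> 0 \<longrightarrow> deg k = 0) \<and>
     (\<forall>i<n. \<forall>j<n. \<forall>k<n. d i j k \<noteq> 0 \<longrightarrow> deg i = (deg j + deg k) mod 2) \<and>
     (\<forall>i<n. c i \<noteq> 0 \<longrightarrow> deg i = 0) \<and>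
     (\<forall>i<n. \<forall>j<n. s i j \<noteq> 0 \<longrightarrow> deg i = deg j) \<and>
     \<comment> \<open>associativity\<close>
     (\<forall>i<n. \<forall>j<n. \<forall>k<n. \<forall>r<n.
        (\<Sum>l<n. m i j l * m l k r) = (\<Sum>l<n. m j k l * m i l r)) \<and>
     \<comment> \<open>unit\<close>
     (\<forall>j<n. \<forall>k<n. (\<Sum>l<n. u l * m l j k) = (if j = k then 1 else 0)) \<and>
     (\<forall>j<n. \<forall>k<n. (\<Sum>l<n. u l * m j l k) = (if j = k then 1 else 0)) \<and>
     \<comment> \<open>coassociativity\<close>
     (\<forall>i<n. \<forall>a<n. \<forall>b<n. \<forall>r<n.
        (\<Sum>l<n. d i l r * d l a b) = (\<Sum>l<n. d i a l * d l b r)) \<and>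
     \<comment> \<open>counit\<close>
     (\<forall>i<n. \<forall>k<n. (\<Sum>j<n. d i j k * c j) = (if i = k then 1 else 0)) \<and>
     (\<forall>i<n. \<forall>j<n. (\<Sum>k<n. d i j k * c k) = (if i = j then 1 else 0)) \<and>
     \<comment> \<open>Delta is a unital algebra homomorphism A -> A (x) A (super tensor product)\<close>
     (\<forall>i<n. \<forall>j<n. \<forall>a<n. \<forall>b<n.
        (\<Sum>k<n. m i j k * d k a b) =
        (\<Sum>p<n. \<Sum>q<n. \<Sum>r<n. \<Sum>t<n.
            (-1) ^ (deg q * deg r) * d i p q * d j r t * m p r a * m q t b)) \<and>
     (\<forall>a<n. \<forall>b<n. (\<Sum>k<n. u k * d k a b) = u a * u b) \<and>
     \<comment> \<open>epsilon is a unital algebra homomorphism\<close>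
     (\<forall>i<n. \<forall>j<n. (\<Sum>k<n. m i j k * c k) = c i * c j) \<and>
     (\<Sum>k<n. u k * c k) = 1 \<and>
     \<comment> \<open>antipode axioms\<close>
     (\<forall>i<n. \<forall>k<n. (\<Sum>p<n. \<Sum>q<n. \<Sum>r<n. d i p q * s p r * m r q k) = c i * u k) \<and>
     (\<forall>i<n. \<forall>k<n. (\<Sum>p<n. \<Sum>q<n. \<Sum>r<n. d i p q * s q r * m p r k) = c i * u k)"

end

theory Submission
  imports Defs
begin

text \<open>
  The unit of a Hopf superalgebra is even, so a three-dimensional \<open>A\<close> with \<open>A\<^sub>1 \<noteq> 0\<close> has
  a homogeneous basis \<open>1, x, z\<close> with \<open>x, z \<in> ker \<epsilon>\<close> and \<open>z\<close> odd, and the axioms, written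
  in structure constants, are invariant under a homogeneous change of basis.
  If \<open>x\<close> is odd as well, then \<open>A\<^sub>0 = K1\<close>, so \<open>x z \<in> A\<^sub>0 \<inter> ker \<epsilon> = 0\<close> and
  \<open>x, z\<close> are primitive; but then \<open>\<Delta>(x z) = (x\<otimes>1 + 1\<otimes>x)(z\<otimes>1 + 1\<otimes>z)\<close> has coefficient
  \<open>1\<close> at \<open>x\<otimes>z\<close>. If \<open>x\<close> is even, the structure is determined by ten scalars, and
  associativity, coassociativity, multiplicativity of \<open>\<Delta>\<close> and the antipode axiom give an
  inconsistent polynomial system.
\<close>


lemma sum_rotate3:
  "(\<Sum>x\<in>A. \<Sum>y\<in>B. \<Sum>z\<in>C. f x y z) = (\<Sum>y\<in>B. \<Sum>z\<in>C. \<Sum>x\<in>A. f x y z :: 'a::comm_monoid_add)"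
  by (rule trans[OF sum.swap], rule sum.cong[OF refl], rule sum.swap)

lemma sum_rotate4:
  "(\<Sum>x\<in>A. \<Sum>y\<in>B. \<Sum>z\<in>C. \<Sum>w\<in>D. f x y z w) =
   (\<Sum>y\<in>B. \<Sum>z\<in>C. \<Sum>w\<in>D. \<Sum>x\<in>A. f x y z w :: 'a::comm_monoid_add)"
  by (rule trans[OF sum.swap], rule sum.cong[OF refl], rule sum_rotate3)

lemma sum_rotate5:
  "(\<Sum>x\<in>A. \<Sum>y\<in>B. \<Sum>z\<in>C. \<Sum>w\<in>D. \<Sum>v\<in>E. f x y z w v) =
   (\<Sum>y\<in>B. \<Sum>z\<in>C. \<Sum>w\<in>D. \<Sum>v\<in>E. \<Sum>x\<in>A. f x y z w v :: 'a::comm_monoid_add)"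
  by (rule trans[OF sum.swap], rule sum.cong[OF refl], rule sum_rotate4)

lemma sum_product_double:
  "(\<Sum>p\<in>A. \<Sum>r\<in>C. f p r) * (\<Sum>q\<in>B. \<Sum>t\<in>D. g q t) =
   (\<Sum>p\<in>A. \<Sum>q\<in>B. \<Sum>r\<in>C. \<Sum>t\<in>D. f p r * g q t :: 'a::comm_semiring_0)"
  by (simp add: sum_product)

locale hopf_sc =
  fixes n :: nat and deg :: "nat \<Rightarrow> nat"
    and m :: "nat \<Rightarrow> nat \<Rightarrow> nat \<Rightarrow> 'k::field" and u :: "nat \<Rightarrow> 'k"
    and d :: "nat \<Rightarrow> nat \<Rightarrow> nat \<Rightarrow> 'k" and c :: "nat \<Rightarrow> 'k" and s :: "nat \<Rightarrow> nat \<Rightarrow> 'k"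
  assumes deg_less_2: "i < n \<Longrightarrow> deg i < 2"
    and mult_deg: "\<lbrakk>i < n; j < n; k < n; m i j k \<noteq> 0\<rbrakk> \<Longrightarrow> deg k = (deg i + deg j) mod 2"
    and unit_deg: "\<lbrakk>k < n; u k \<noteq> 0\<rbrakk> \<Longrightarrow> deg k = 0"
    and comult_deg: "\<lbrakk>i < n; j < n; k < n; d i j k \<noteq> 0\<rbrakk> \<Longrightarrow> deg i = (deg j + deg k) mod 2"
    and counit_deg: "\<lbrakk>i < n; c i \<noteq> 0\<rbrakk> \<Longrightarrow> deg i = 0"
    and antipode_deg: "\<lbrakk>i < n; j < n; s i j \<noteq> 0\<rbrakk> \<Longrightarrow> deg i = deg j"
    and mult_assoc: "\<lbrakk>i < n; j < n; k < n; r < n\<rbrakk> \<Longrightarrow>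
      (\<Sum>l<n. m i j l * m l k r) = (\<Sum>l<n. m j k l * m i l r)"
    and unit_mult: "\<lbrakk>j < n; k < n\<rbrakk> \<Longrightarrow> (\<Sum>l<n. u l * m l j k) = (if j = k then 1 else 0)"
    and mult_unit: "\<lbrakk>j < n; k < n\<rbrakk> \<Longrightarrow> (\<Sum>l<n. u l * m j l k) = (if j = k then 1 else 0)"
    and comult_coassoc: "\<lbrakk>i < n; a < n; b < n; r < n\<rbrakk> \<Longrightarrow>
      (\<Sum>l<n. d i l r * d l a b) = (\<Sum>l<n. d i a l * d l b r)"
    and counit_comult_left: "\<lbrakk>i < n; k < n\<rbrakk> \<Longrightarrow> (\<Sum>j<n. d i j k * c j) = (if i = k then 1 else 0)"
    and counit_comult_right: "\<lbrakk>i < n; j < n\<rbrakk> \<Longrightarrow> (\<Sum>k<n. d i j k * c k) = (if i = j then 1 else 0)"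
    and comult_mult: "\<lbrakk>i < n; j < n; a < n; b < n\<rbrakk> \<Longrightarrow>
      (\<Sum>k<n. m i j k * d k a b) =
      (\<Sum>p<n. \<Sum>q<n. \<Sum>r<n. \<Sum>t<n. (-1) ^ (deg q * deg r) * d i p q * d j r t * m p r a * m q t b)"
    and comult_unit: "\<lbrakk>a < n; b < n\<rbrakk> \<Longrightarrow> (\<Sum>k<n. u k * d k a b) = u a * u b"
    and counit_mult: "\<lbrakk>i < n; j < n\<rbrakk> \<Longrightarrow> (\<Sum>k<n. m i j k * c k) = c i * c j"
    and counit_unit: "(\<Sum>k<n. u k * c k) = 1"
    and antipode_left: "\<lbrakk>i < n; k < n\<rbrakk> \<Longrightarrow>
      (\<Sum>p<n. \<Sum>q<n. \<Sum>r<n. d i p q * s p r * m r q k) = c i * u k"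
    and antipode_right: "\<lbrakk>i < n; k < n\<rbrakk> \<Longrightarrow>
      (\<Sum>p<n. \<Sum>q<n. \<Sum>r<n. d i p q * s q r * m p r k) = c i * u k"

lemma hopf_sc_if_hopf_superalgebra_sc:
  "hopf_superalgebra_sc n deg m u d c s \<Longrightarrow> hopf_sc n deg m u d c s"
  unfolding hopf_superalgebra_sc_def by (elim conjE) (rule hopf_sc.intro; simp (no_asm_simp))

context hopf_sc
begin

lemma mult_eq_0_if_deg: "\<lbrakk>i < n; j < n; k < n; deg k \<noteq> (deg i + deg j) mod 2\<rbrakk> \<Longrightarrow> m i j k = 0"
  using mult_deg by blast

lemma comult_eq_0_if_deg: "\<lbrakk>i < n; j < n; k < n; deg i \<noteq> (deg j + deg k) mod 2\<rbrakk> \<Longrightarrow> d i j k = 0"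
  using comult_deg by blast

lemma antipode_eq_0_if_deg: "\<lbrakk>i < n; j < n; deg i \<noteq> deg j\<rbrakk> \<Longrightarrow> s i j = 0"
  using antipode_deg by blast

lemma exists_even_index: "\<exists>i<n. deg i = 0"
proof -
  have "(\<Sum>k<n. u k * c k) \<noteq> 0" using counit_unit by simp
  then obtain k where "k < n" "u k * c k \<noteq> 0"
    by (rule sum.not_neutral_contains_not_neutral) simp
  then show ?thesis using unit_deg by auto
qed

end

definition tensor_mult ::
  "nat \<Rightarrow> (nat \<Rightarrow> nat) \<Rightarrow> (nat \<Rightarrow> nat \<Rightarrow> nat \<Rightarrow> 'k::comm_ring_1)
    \<Rightarrow> (nat \<Rightarrow> nat \<Rightarrow> 'k) \<Rightarrow> (nat \<Rightarrow> nat \<Rightarrow> 'k) \<Rightarrow> nat \<Rightarrow> nat \<Rightarrow> 'k" where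
  "tensor_mult n deg m A B z w = (\<Sum>x<n. \<Sum>y<n. \<Sum>x'<n. \<Sum>y'<n.
      (-1) ^ (deg y * deg x') * A x y * B x' y' * m x x' z * m y y' w)"

lemma tensor_mult_sum_left:
  "tensor_mult n deg m (\<lambda>x y. \<Sum>l\<in>L. f l x y) B z w = (\<Sum>l\<in>L. tensor_mult n deg m (f l) B z w)"
  unfolding tensor_mult_def
  by (simp add: sum_distrib_left sum_distrib_right mult_ac, rule sum_rotate5[symmetric])

lemma tensor_mult_scale_left:
  "tensor_mult n deg m (\<lambda>x y. k * f x y) B z w = k * tensor_mult n deg m f B z w"
  unfolding tensor_mult_def by (simp add: sum_distrib_left mult_ac)

lemma tensor_mult_sum_right:
  "tensor_mult n deg m A (\<lambda>x y. \<Sum>l\<in>L. f l x y) z w = (\<Sum>l\<in>L. tensor_mult n deg m A (f l) z w)"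
  unfolding tensor_mult_def
  by (simp add: sum_distrib_left sum_distrib_right mult_ac, rule sum_rotate5[symmetric])

lemma tensor_mult_scale_right:
  "tensor_mult n deg m A (\<lambda>x y. k * f x y) z w = k * tensor_mult n deg m A f z w"
  unfolding tensor_mult_def by (simp add: sum_distrib_left mult_ac)

section \<open>Homogeneous change of basis\<close>

text \<open>The new basis is \<open>f\<^sub>a = \<Sum>\<^sub>p P a p e\<^sub>p\<close>, homogeneous of parity \<open>deg' a\<close>, with
  \<open>e\<^sub>p = \<Sum>\<^sub>a Q p a f\<^sub>a\<close>. Vectors are functions giving their coordinates in the old basis
  \<open>e\<close>; \<open>coord\<close> and \<open>coord2\<close> give coordinates of vectors and tensors in the new basis.\<close>

locale homogeneous_basis_change = hopf_sc n deg m u d c s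
  for n deg and m :: "nat \<Rightarrow> nat \<Rightarrow> nat \<Rightarrow> 'k::field" and u d c s +
  fixes deg' :: "nat \<Rightarrow> nat" and P Q :: "nat \<Rightarrow> nat \<Rightarrow> 'k"
  assumes P_Q_inverse: "\<lbrakk>a < n; b < n\<rbrakk> \<Longrightarrow> (\<Sum>l<n. P a l * Q l b) = (if a = b then 1 else 0)"
    and Q_P_inverse: "\<lbrakk>a < n; b < n\<rbrakk> \<Longrightarrow> (\<Sum>l<n. Q a l * P l b) = (if a = b then 1 else 0)"
    and P_deg: "\<lbrakk>a < n; p < n; P a p \<noteq> 0\<rbrakk> \<Longrightarrow> deg' a = deg p"
    and Q_deg: "\<lbrakk>p < n; a < n; Q p a \<noteq> 0\<rbrakk> \<Longrightarrow> deg' a = deg p"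
    and deg'_less_2: "a < n \<Longrightarrow> deg' a < 2"
begin

definition vmult :: "(nat \<Rightarrow> 'k) \<Rightarrow> (nat \<Rightarrow> 'k) \<Rightarrow> nat \<Rightarrow> 'k" where
  "vmult v w r = (\<Sum>p<n. \<Sum>q<n. v p * w q * m p q r)"

definition vcomult :: "(nat \<Rightarrow> 'k) \<Rightarrow> nat \<Rightarrow> nat \<Rightarrow> 'k" where
  "vcomult v x y = (\<Sum>i<n. v i * d i x y)"

definition vcounit :: "(nat \<Rightarrow> 'k) \<Rightarrow> 'k" where
  "vcounit v = (\<Sum>i<n. v i * c i)"

definition vantipode :: "(nat \<Rightarrow> 'k) \<Rightarrow> nat \<Rightarrow> 'k" where
  "vantipode v r = (\<Sum>p<n. v p * s p r)"

definition coord :: "(nat \<Rightarrow> 'k) \<Rightarrow> nat \<Rightarrow> 'k" where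
  "coord v a = (\<Sum>x<n. v x * Q x a)"

definition coord2 :: "(nat \<Rightarrow> nat \<Rightarrow> 'k) \<Rightarrow> nat \<Rightarrow> nat \<Rightarrow> 'k" where
  "coord2 T a b = (\<Sum>x<n. \<Sum>y<n. T x y * Q x a * Q y b)"

lemma vmult_sum_left: "vmult (\<lambda>p. \<Sum>l\<in>L. f l p) w = (\<lambda>r. \<Sum>l\<in>L. vmult (f l) w r)"
  unfolding vmult_def
  by (rule ext) (simp add: sum_distrib_left sum_distrib_right mult_ac, rule sum_rotate3[symmetric])

lemma vmult_scale_left: "vmult (\<lambda>p. k * f p) w = (\<lambda>r. k * vmult f w r)"
  unfolding vmult_def by (simp add: sum_distrib_left mult_ac)

lemma vmult_sum_right: "vmult v (\<lambda>q. \<Sum>l\<in>L. f l q) = (\<lambda>r. \<Sum>l\<in>L. vmult v (f l) r)"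
  unfolding vmult_def
  by (rule ext) (simp add: sum_distrib_left sum_distrib_right mult_ac, rule sum_rotate3[symmetric])

lemma vmult_scale_right: "vmult v (\<lambda>q. k * f q) = (\<lambda>r. k * vmult v f r)"
  unfolding vmult_def by (simp add: sum_distrib_left mult_ac)

lemma vcomult_sum: "vcomult (\<lambda>x. \<Sum>l\<in>L. f l x) = (\<lambda>a b. \<Sum>l\<in>L. vcomult (f l) a b)"
  unfolding vcomult_def by (intro ext) (simp add: sum_distrib_left sum_distrib_right, rule sum.swap)

lemma vcomult_scale: "vcomult (\<lambda>x. k * f x) = (\<lambda>a b. k * vcomult f a b)"
  unfolding vcomult_def by (simp add: sum_distrib_left mult_ac)

lemma vcounit_sum: "vcounit (\<lambda>x. \<Sum>l\<in>L. f l x) = (\<Sum>l\<in>L. vcounit (f l))"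
  unfolding vcounit_def by (simp add: sum_distrib_left sum_distrib_right, rule sum.swap)

lemma vcounit_scale: "vcounit (\<lambda>x. k * f x) = k * vcounit f"
  unfolding vcounit_def by (simp add: sum_distrib_left mult_ac)

lemma vantipode_sum: "vantipode (\<lambda>x. \<Sum>l\<in>L. f l x) = (\<lambda>r. \<Sum>l\<in>L. vantipode (f l) r)"
  unfolding vantipode_def by (rule ext) (simp add: sum_distrib_left sum_distrib_right, rule sum.swap)

lemma vantipode_scale: "vantipode (\<lambda>x. k * f x) = (\<lambda>r. k * vantipode f r)"
  unfolding vantipode_def by (simp add: sum_distrib_left mult_ac)

lemma coord_sum: "coord (\<lambda>x. \<Sum>l\<in>L. f l x) r = (\<Sum>l\<in>L. coord (f l) r)"
  unfolding coord_def by (simp add: sum_distrib_left sum_distrib_right, rule sum.swap)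

lemma coord_scale: "coord (\<lambda>x. k * f x) r = k * coord f r"
  unfolding coord_def by (simp add: sum_distrib_left mult_ac)

lemma coord2_sum: "coord2 (\<lambda>x y. \<Sum>l\<in>L. f l x y) a b = (\<Sum>l\<in>L. coord2 (f l) a b)"
  unfolding coord2_def by (simp add: sum_distrib_left sum_distrib_right mult_ac, rule sum_rotate3[symmetric])

lemma coord2_scale: "coord2 (\<lambda>x y. k * f x y) a b = k * coord2 f a b"
  unfolding coord2_def by (simp add: sum_distrib_left mult_ac)

lemma coord2_tensor: "coord2 (\<lambda>x y. f x * g y) a b = coord f a * coord g b"
  by (simp add: coord2_def coord_def sum_product mult_ac)

lemma vmult_unit_left: "r < n \<Longrightarrow> vmult u w r = w r"
proof -
  assume "r < n"
  have "vmult u w r = (\<Sum>q<n. w q * (\<Sum>p<n. u p * m p q r))"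
    unfolding vmult_def by (simp add: sum_distrib_left mult_ac, rule sum.swap)
  also have "\<dots> = (\<Sum>q<n. w q * (if q = r then 1 else 0))"
    using \<open>r < n\<close> by (simp add: unit_mult)
  finally show ?thesis using \<open>r < n\<close> by (simp add: if_distrib[of "\<lambda>z. _ * z"] cong: if_cong)
qed

lemma vmult_unit_right: "r < n \<Longrightarrow> vmult w u r = w r"
proof -
  assume "r < n"
  have "vmult w u r = (\<Sum>p<n. w p * (\<Sum>q<n. u q * m p q r))"
    unfolding vmult_def by (simp add: sum_distrib_left mult_ac)
  also have "\<dots> = (\<Sum>p<n. w p * (if p = r then 1 else 0))"
    using \<open>r < n\<close> by (simp add: mult_unit)
  finally show ?thesis using \<open>r < n\<close> by (simp add: if_distrib[of "\<lambda>z. _ * z"] cong: if_cong)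
qed

lemma vmult_assoc: "r < n \<Longrightarrow> vmult (vmult x y) z r = vmult x (vmult y z) r"
proof -
  assume "r < n"
  have left: "vmult (m p q) z r = (\<Sum>t<n. z t * (\<Sum>l<n. m p q l * m l t r))" for p q
    unfolding vmult_def by (simp add: sum_distrib_left mult_ac, rule sum.swap)
  have right: "vmult x (m q t) r = (\<Sum>p<n. x p * (\<Sum>l<n. m q t l * m p l r))" for q t
    unfolding vmult_def by (simp add: sum_distrib_left mult_ac)
  have "vmult (vmult x y) z r = (\<Sum>p<n. \<Sum>q<n. x p * y q * vmult (m p q) z r)"
    by (simp add: vmult_def[of x y, abs_def] vmult_sum_left vmult_scale_left)
  also have "\<dots> = (\<Sum>p<n. \<Sum>q<n. \<Sum>t<n. x p * y q * z t * (\<Sum>l<n. m p q l * m l t r))"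
    by (simp add: left sum_distrib_left mult_ac)
  also have "\<dots> = (\<Sum>p<n. \<Sum>q<n. \<Sum>t<n. x p * y q * z t * (\<Sum>l<n. m q t l * m p l r))"
    using \<open>r < n\<close> by (intro sum.cong refl) (simp add: mult_assoc)
  also have "\<dots> = (\<Sum>q<n. \<Sum>t<n. \<Sum>p<n. x p * y q * z t * (\<Sum>l<n. m q t l * m p l r))"
    by (rule sum_rotate3)
  also have "\<dots> = (\<Sum>q<n. \<Sum>t<n. y q * z t * vmult x (m q t) r)"
    by (simp add: right sum_distrib_left mult_ac)
  also have "\<dots> = vmult x (vmult y z) r"
    by (simp add: vmult_def[of y z, abs_def] vmult_sum_right vmult_scale_right)
  finally show ?thesis .
qed

lemma vcounit_vmult: "vcounit (vmult v w) = vcounit v * vcounit w"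
proof -
  have "vcounit (vmult v w) = (\<Sum>p<n. \<Sum>q<n. v p * w q * (\<Sum>k<n. m p q k * c k))"
    unfolding vcounit_def vmult_def
    by (simp add: sum_distrib_left sum_distrib_right mult_ac, rule sum_rotate3)
  also have "\<dots> = (\<Sum>p<n. \<Sum>q<n. v p * w q * (c p * c q))"
    by (simp add: counit_mult)
  also have "\<dots> = vcounit v * vcounit w"
    unfolding vcounit_def by (simp add: sum_product mult_ac)
  finally show ?thesis .
qed

lemma vcomult_vmult:
  assumes "a < n" "b < n"
  shows "vcomult (vmult v w) a b = tensor_mult n deg m (vcomult v) (vcomult w) a b"
proof -
  have "vcomult (vmult v w) a b = (\<Sum>p<n. \<Sum>q<n. v p * w q * vcomult (m p q) a b)"
    by (simp add: vmult_def[abs_def] vcomult_sum vcomult_scale)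
  also have "\<dots> = (\<Sum>p<n. \<Sum>q<n. v p * w q * tensor_mult n deg m (d p) (d q) a b)"
    using assms by (simp add: vcomult_def tensor_mult_def comult_mult)
  also have "\<dots> = tensor_mult n deg m (vcomult v) (vcomult w) a b"
    by (simp add: vcomult_def[abs_def] tensor_mult_sum_left tensor_mult_scale_left
        tensor_mult_sum_right tensor_mult_scale_right sum_distrib_left mult_ac)
  finally show ?thesis .
qed

lemma vcomult_coassoc:
  assumes "x < n" "y < n" "z < n"
  shows "(\<Sum>p<n. vcomult v p y * d p x z) = (\<Sum>l<n. vcomult v x l * d l z y)"
proof -
  have "(\<Sum>p<n. vcomult v p y * d p x z) = (\<Sum>p<n. \<Sum>i<n. v i * (d i p y * d p x z))"
    by (simp add: vcomult_def sum_distrib_left sum_distrib_right mult_ac)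
  also have "\<dots> = (\<Sum>i<n. \<Sum>p<n. v i * (d i p y * d p x z))"
    by (rule sum.swap)
  also have "\<dots> = (\<Sum>i<n. v i * (\<Sum>l<n. d i x l * d l z y))"
    using assms by (simp add: sum_distrib_left[symmetric] comult_coassoc)
  also have "\<dots> = (\<Sum>i<n. \<Sum>l<n. v i * (d i x l * d l z y))"
    by (simp add: sum_distrib_left)
  also have "\<dots> = (\<Sum>l<n. \<Sum>i<n. v i * (d i x l * d l z y))"
    by (rule sum.swap)
  also have "\<dots> = (\<Sum>l<n. vcomult v x l * d l z y)"
    by (simp add: vcomult_def sum_distrib_left sum_distrib_right mult_ac)
  finally show ?thesis .
qed

lemma vcounit_vcomult_left: "y < n \<Longrightarrow> (\<Sum>x<n. vcomult v x y * c x) = v y"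
proof -
  assume "y < n"
  have "(\<Sum>x<n. vcomult v x y * c x) = (\<Sum>i<n. v i * (\<Sum>x<n. d i x y * c x))"
    by (simp add: vcomult_def sum_distrib_left sum_distrib_right mult_ac, rule sum.swap)
  also have "\<dots> = (\<Sum>i<n. v i * (if i = y then 1 else 0))"
    using \<open>y < n\<close> by (simp add: counit_comult_left)
  finally show ?thesis using \<open>y < n\<close> by (simp add: if_distrib[of "\<lambda>z. _ * z"] cong: if_cong)
qed

lemma vcounit_vcomult_right: "x < n \<Longrightarrow> (\<Sum>y<n. vcomult v x y * c y) = v x"
proof -
  assume "x < n"
  have "(\<Sum>y<n. vcomult v x y * c y) = (\<Sum>i<n. v i * (\<Sum>y<n. d i x y * c y))"
    by (simp add: vcomult_def sum_distrib_left sum_distrib_right mult_ac, rule sum.swap)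
  also have "\<dots> = (\<Sum>i<n. v i * (if i = x then 1 else 0))"
    using \<open>x < n\<close> by (simp add: counit_comult_right)
  finally show ?thesis using \<open>x < n\<close> by (simp add: if_distrib[of "\<lambda>z. _ * z"] cong: if_cong)
qed

lemma vcomult_unit: "\<lbrakk>a < n; b < n\<rbrakk> \<Longrightarrow> vcomult u a b = u a * u b"
  by (simp add: vcomult_def comult_unit)

lemma vantipode_left:
  "k < n \<Longrightarrow> (\<Sum>x<n. \<Sum>y<n. \<Sum>r<n. vcomult v x y * s x r * m r y k) = vcounit v * u k"
proof -
  assume "k < n"
  have "(\<Sum>x<n. \<Sum>y<n. \<Sum>r<n. vcomult v x y * s x r * m r y k)
      = (\<Sum>x<n. \<Sum>y<n. \<Sum>r<n. \<Sum>i<n. v i * (d i x y * s x r * m r y k))"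
    by (simp add: vcomult_def sum_distrib_left sum_distrib_right mult_ac)
  also have "\<dots> = (\<Sum>i<n. \<Sum>x<n. \<Sum>y<n. \<Sum>r<n. v i * (d i x y * s x r * m r y k))"
    by (rule sum_rotate4[symmetric])
  also have "\<dots> = (\<Sum>i<n. v i * (\<Sum>x<n. \<Sum>y<n. \<Sum>r<n. d i x y * s x r * m r y k))"
    by (simp add: sum_distrib_left)
  also have "\<dots> = (\<Sum>i<n. v i * (c i * u k))"
    using \<open>k < n\<close> by (simp add: antipode_left)
  also have "\<dots> = vcounit v * u k"
    by (simp add: vcounit_def sum_distrib_left sum_distrib_right mult_ac)
  finally show ?thesis .
qed

lemma vantipode_right:
  "k < n \<Longrightarrow> (\<Sum>x<n. \<Sum>y<n. \<Sum>r<n. vcomult v x y * s y r * m x r k) = vcounit v * u k"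
proof -
  assume "k < n"
  have "(\<Sum>x<n. \<Sum>y<n. \<Sum>r<n. vcomult v x y * s y r * m x r k)
      = (\<Sum>x<n. \<Sum>y<n. \<Sum>r<n. \<Sum>i<n. v i * (d i x y * s y r * m x r k))"
    by (simp add: vcomult_def sum_distrib_left sum_distrib_right mult_ac)
  also have "\<dots> = (\<Sum>i<n. \<Sum>x<n. \<Sum>y<n. \<Sum>r<n. v i * (d i x y * s y r * m x r k))"
    by (rule sum_rotate4[symmetric])
  also have "\<dots> = (\<Sum>i<n. v i * (\<Sum>x<n. \<Sum>y<n. \<Sum>r<n. d i x y * s y r * m x r k))"
    by (simp add: sum_distrib_left)
  also have "\<dots> = (\<Sum>i<n. v i * (c i * u k))"
    using \<open>k < n\<close> by (simp add: antipode_right)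
  also have "\<dots> = vcounit v * u k"
    by (simp add: vcounit_def sum_distrib_left sum_distrib_right mult_ac)
  finally show ?thesis .
qed

lemma vmult_delta_left:
  assumes "x < n"
  shows "vmult (\<lambda>z. if x = z then 1 else 0) w r = (\<Sum>q<n. w q * m x q r)"
proof -
  have "vmult (\<lambda>z. if x = z then 1 else 0) w r
      = (\<Sum>p<n. (if x = p then 1 else 0) * (\<Sum>q<n. w q * m p q r))"
    unfolding vmult_def by (simp add: sum_distrib_left mult.assoc)
  then show ?thesis using assms by (simp add: if_distrib[of "\<lambda>z. z * _"] cong: if_cong)
qed

lemma vmult_delta_right:
  assumes "y < n"
  shows "vmult v (\<lambda>z. if y = z then 1 else 0) r = (\<Sum>p<n. v p * m p y r)"
proof -
  have "vmult v (\<lambda>z. if y = z then 1 else 0) r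
      = (\<Sum>p<n. v p * (\<Sum>q<n. (if y = q then 1 else 0) * m p q r))"
    unfolding vmult_def by (simp add: sum_distrib_left mult.assoc)
  then show ?thesis using assms by (simp add: if_distrib[of "\<lambda>z. z * _"] cong: if_cong)
qed

lemma vantipode_delta: "x < n \<Longrightarrow> vantipode (\<lambda>z. if x = z then 1 else 0) r = s x r"
  by (simp add: vantipode_def if_distrib[of "\<lambda>z. z * _"] cong: if_cong)

lemma coord_expansion: "p < n \<Longrightarrow> (\<Sum>l<n. coord X l * P l p) = X p"
proof -
  assume "p < n"
  have "(\<Sum>l<n. coord X l * P l p) = (\<Sum>l<n. \<Sum>x<n. X x * (Q x l * P l p))"
    by (simp add: coord_def sum_distrib_left sum_distrib_right mult_ac)
  also have "\<dots> = (\<Sum>x<n. X x * (\<Sum>l<n. Q x l * P l p))"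
    by (subst sum.swap) (simp add: sum_distrib_left)
  also have "\<dots> = (\<Sum>x<n. X x * (if x = p then 1 else 0))"
    using \<open>p < n\<close> by (simp add: Q_P_inverse)
  finally show ?thesis using \<open>p < n\<close> by (simp add: if_distrib[of "\<lambda>z. _ * z"] cong: if_cong)
qed

lemma coord_P: "\<lbrakk>a < n; r < n\<rbrakk> \<Longrightarrow> coord (P a) r = (if a = r then 1 else 0)"
  by (simp add: coord_def P_Q_inverse)

lemma coord_cong: "(\<And>x. x < n \<Longrightarrow> v x = v' x) \<Longrightarrow> coord v r = coord v' r"
  unfolding coord_def by (rule sum.cong) auto

lemma coord2_cong:
  "(\<And>x y. x < n \<Longrightarrow> y < n \<Longrightarrow> T x y = T' x y) \<Longrightarrow> coord2 T a b = coord2 T' a b"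
  unfolding coord2_def by (intro sum.cong) auto

lemma vcounit_cong: "(\<And>x. x < n \<Longrightarrow> v x = v' x) \<Longrightarrow> vcounit v = vcounit v'"
  unfolding vcounit_def by (rule sum.cong) auto

lemma vmult_cong:
  "\<lbrakk>\<And>x. x < n \<Longrightarrow> v x = v' x; \<And>x. x < n \<Longrightarrow> w x = w' x\<rbrakk> \<Longrightarrow> vmult v w r = vmult v' w' r"
  unfolding vmult_def by (intro sum.cong) auto

lemma vantipode_cong: "(\<And>x. x < n \<Longrightarrow> v x = v' x) \<Longrightarrow> vantipode v r = vantipode v' r"
  unfolding vantipode_def by (rule sum.cong) auto

lemma vcomult_cong: "(\<And>x. x < n \<Longrightarrow> v x = v' x) \<Longrightarrow> vcomult v a b = vcomult v' a b"
  unfolding vcomult_def by (rule sum.cong) auto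

lemma coord_vmult_expand_left: "(\<Sum>l<n. coord X l * coord (vmult (P l) w) r) = coord (vmult X w) r"
proof -
  have "(\<Sum>l<n. coord X l * coord (vmult (P l) w) r)
      = coord (vmult (\<lambda>p. \<Sum>l<n. coord X l * P l p) w) r"
    by (simp add: vmult_sum_left vmult_scale_left coord_sum coord_scale)
  also have "\<dots> = coord (vmult X w) r"
    by (intro coord_cong vmult_cong) (simp_all add: coord_expansion)
  finally show ?thesis .
qed

lemma coord_vmult_expand_right: "(\<Sum>l<n. coord X l * coord (vmult v (P l)) r) = coord (vmult v X) r"
proof -
  have "(\<Sum>l<n. coord X l * coord (vmult v (P l)) r)
      = coord (vmult v (\<lambda>p. \<Sum>l<n. coord X l * P l p)) r"
    by (simp add: vmult_sum_right vmult_scale_right coord_sum coord_scale)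
  also have "\<dots> = coord (vmult v X) r"
    by (intro coord_cong vmult_cong) (simp_all add: coord_expansion)
  finally show ?thesis .
qed

lemma coord2_vcomult_expand: "(\<Sum>l<n. coord X l * coord2 (vcomult (P l)) a b) = coord2 (vcomult X) a b"
proof -
  have "(\<Sum>l<n. coord X l * coord2 (vcomult (P l)) a b)
      = coord2 (vcomult (\<lambda>p. \<Sum>l<n. coord X l * P l p)) a b"
    by (simp add: vcomult_sum vcomult_scale coord2_sum coord2_scale)
  also have "\<dots> = coord2 (vcomult X) a b"
    by (intro coord2_cong vcomult_cong) (simp_all add: coord_expansion)
  finally show ?thesis .
qed

lemma vcounit_expand: "(\<Sum>l<n. coord X l * vcounit (P l)) = vcounit X"
proof -
  have "(\<Sum>l<n. coord X l * vcounit (P l)) = vcounit (\<lambda>p. \<Sum>l<n. coord X l * P l p)"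
    by (simp add: vcounit_sum vcounit_scale)
  also have "\<dots> = vcounit X"
    by (intro vcounit_cong) (simp add: coord_expansion)
  finally show ?thesis .
qed

lemma coord2_eq_coord_left: "coord2 T l r = coord (\<lambda>x. \<Sum>y<n. T x y * Q y r) l"
  by (simp add: coord2_def coord_def sum_distrib_left sum_distrib_right mult_ac)

lemma coord2_eq_coord_right: "coord2 T a l = coord (\<lambda>y. \<Sum>x<n. T x y * Q x a) l"
  unfolding coord2_def coord_def by (subst sum.swap) (simp add: sum_distrib_right)

definition m' :: "nat \<Rightarrow> nat \<Rightarrow> nat \<Rightarrow> 'k" where "m' a b r = coord (vmult (P a) (P b)) r"
definition u' :: "nat \<Rightarrow> 'k" where "u' r = coord u r"
definition d' :: "nat \<Rightarrow> nat \<Rightarrow> nat \<Rightarrow> 'k" where "d' a x y = coord2 (vcomult (P a)) x y"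
definition c' :: "nat \<Rightarrow> 'k" where "c' a = vcounit (P a)"
definition s' :: "nat \<Rightarrow> nat \<Rightarrow> 'k" where "s' a b = coord (vantipode (P a)) b"

lemma new_mult_assoc:
  assumes "a < n" "b < n" "e < n" "r < n"
  shows "(\<Sum>l<n. m' a b l * m' l e r) = (\<Sum>l<n. m' b e l * m' a l r)"
proof -
  have "(\<Sum>l<n. m' a b l * m' l e r) = coord (vmult (vmult (P a) (P b)) (P e)) r"
    unfolding m'_def by (rule coord_vmult_expand_left)
  also have "\<dots> = coord (vmult (P a) (vmult (P b) (P e))) r"
    by (intro coord_cong) (simp add: vmult_assoc)
  also have "\<dots> = (\<Sum>l<n. m' b e l * m' a l r)"
    unfolding m'_def by (rule coord_vmult_expand_right[symmetric])
  finally show ?thesis .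
qed

lemma new_unit_mult: "\<lbrakk>j < n; k < n\<rbrakk> \<Longrightarrow> (\<Sum>l<n. u' l * m' l j k) = (if j = k then 1 else 0)"
  unfolding m'_def u'_def
  by (simp add: coord_vmult_expand_left vmult_unit_left coord_P cong: coord_cong)

lemma new_mult_unit: "\<lbrakk>j < n; k < n\<rbrakk> \<Longrightarrow> (\<Sum>l<n. u' l * m' j l k) = (if j = k then 1 else 0)"
  unfolding m'_def u'_def
  by (simp add: coord_vmult_expand_right vmult_unit_right coord_P cong: coord_cong)

lemma new_counit_comult_left:
  assumes "i < n" "k < n"
  shows "(\<Sum>j<n. d' i j k * c' j) = (if i = k then 1 else 0)"
proof -
  have "(\<Sum>j<n. d' i j k * c' j) = vcounit (\<lambda>x. \<Sum>y<n. vcomult (P i) x y * Q y k)"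
    unfolding d'_def c'_def coord2_eq_coord_left by (rule vcounit_expand)
  also have "\<dots> = (\<Sum>y<n. (\<Sum>x<n. vcomult (P i) x y * c x) * Q y k)"
    unfolding vcounit_def by (simp add: sum_distrib_left sum_distrib_right mult_ac, rule sum.swap)
  also have "\<dots> = (\<Sum>y<n. P i y * Q y k)"
    by (intro sum.cong refl) (simp add: vcounit_vcomult_left)
  finally show ?thesis using assms by (simp add: P_Q_inverse)
qed

lemma new_counit_comult_right:
  assumes "i < n" "j < n"
  shows "(\<Sum>k<n. d' i j k * c' k) = (if i = j then 1 else 0)"
proof -
  have "(\<Sum>k<n. d' i j k * c' k) = vcounit (\<lambda>y. \<Sum>x<n. vcomult (P i) x y * Q x j)"
    unfolding d'_def c'_def coord2_eq_coord_right by (rule vcounit_expand)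
  also have "\<dots> = (\<Sum>x<n. (\<Sum>y<n. vcomult (P i) x y * c y) * Q x j)"
    unfolding vcounit_def by (simp add: sum_distrib_left sum_distrib_right mult_ac, rule sum.swap)
  also have "\<dots> = (\<Sum>x<n. P i x * Q x j)"
    by (intro sum.cong refl) (simp add: vcounit_vcomult_right)
  finally show ?thesis using assms by (simp add: P_Q_inverse)
qed

lemma new_counit_mult: "(\<Sum>k<n. m' i j k * c' k) = c' i * c' j"
  unfolding m'_def c'_def by (simp add: vcounit_expand vcounit_vmult)

lemma new_counit_unit: "(\<Sum>k<n. u' k * c' k) = 1"
  unfolding u'_def c'_def by (simp add: vcounit_expand counit_unit[folded vcounit_def])

lemma new_comult_unit: "(\<Sum>k<n. u' k * d' k a b) = u' a * u' b"
proof -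
  have "(\<Sum>k<n. u' k * d' k a b) = coord2 (vcomult u) a b"
    unfolding u'_def d'_def by (rule coord2_vcomult_expand)
  also have "\<dots> = coord2 (\<lambda>x y. u x * u y) a b"
    by (intro coord2_cong) (simp add: vcomult_unit)
  finally show ?thesis by (simp add: coord2_tensor u'_def)
qed

lemma new_comult_coassoc:
  assumes "a < n" "b < n" "r < n"
  shows "(\<Sum>l<n. d' i l r * d' l a b) = (\<Sum>l<n. d' i a l * d' l b r)"
proof -
  define A where "A = vcomult (P i)"
  have "(\<Sum>l<n. d' i l r * d' l a b) = coord2 (vcomult (\<lambda>x. \<Sum>y<n. A x y * Q y r)) a b"
    unfolding d'_def coord2_eq_coord_left[of "vcomult (P i)"] A_def by (rule coord2_vcomult_expand)
  also have "\<dots> = (\<Sum>z<n. \<Sum>w<n. \<Sum>y<n. Q z a * Q w b * Q y r * (\<Sum>p<n. A p y * d p z w))"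
    by (simp add: coord2_def vcomult_def sum_distrib_left sum_distrib_right mult_ac,
        rule sum.cong[OF refl], rule sum.cong[OF refl], rule sum.swap)
  also have "\<dots> = (\<Sum>z<n. \<Sum>w<n. \<Sum>y<n. Q z a * Q w b * Q y r * (\<Sum>l<n. A z l * d l w y))"
    unfolding A_def by (intro sum.cong refl) (simp add: vcomult_coassoc)
  also have "\<dots> = (\<Sum>w<n. \<Sum>y<n. \<Sum>z<n. \<Sum>l<n. Q z a * Q w b * Q y r * (A z l * d l w y))"
    by (subst sum_rotate3) (simp add: sum_distrib_left)
  also have "\<dots> = (\<Sum>w<n. \<Sum>y<n. \<Sum>l<n. \<Sum>z<n. Q z a * Q w b * Q y r * (A z l * d l w y))"
    by (rule sum.cong[OF refl], rule sum.cong[OF refl], rule sum.swap)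
  also have "\<dots> = coord2 (vcomult (\<lambda>y. \<Sum>x<n. A x y * Q x a)) b r"
    by (simp add: coord2_def vcomult_def sum_distrib_left sum_distrib_right mult_ac)
  also have "\<dots> = (\<Sum>l<n. d' i a l * d' l b r)"
    unfolding d'_def coord2_eq_coord_right[of "vcomult (P i)"] A_def
    by (rule coord2_vcomult_expand[symmetric])
  finally show ?thesis .
qed

lemma new_mult_contract:
  assumes "x < n" "x' < n"
  shows "(\<Sum>p<n. \<Sum>r<n. Q x p * Q x' r * m' p r a) = coord (m x x') a"
proof -
  have "(\<Sum>p<n. \<Sum>r<n. Q x p * Q x' r * m' p r a)
      = coord (vmult (\<lambda>z. \<Sum>p<n. Q x p * P p z) (\<lambda>z. \<Sum>r<n. Q x' r * P r z)) a"
    unfolding m'_def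
    by (simp add: vmult_sum_left vmult_scale_left vmult_sum_right vmult_scale_right
        coord_sum coord_scale sum_distrib_left mult.assoc)
  also have "\<dots> = coord (vmult (\<lambda>z. if x = z then 1 else 0) (\<lambda>z. if x' = z then 1 else 0)) a"
    using assms by (intro coord_cong vmult_cong) (simp_all add: Q_P_inverse)
  also have "\<dots> = coord (m x x') a"
    using assms by (intro coord_cong) (simp add: vmult_delta_left if_distrib[of "\<lambda>z. z * _"] cong: if_cong)
  finally show ?thesis .
qed

lemma new_tensor_mult_contract:
  assumes "x < n" "y < n" "x' < n" "y' < n"
  shows "tensor_mult n deg' m' (\<lambda>p q. Q x p * Q y q) (\<lambda>r t. Q x' r * Q y' t) a b
       = (-1) ^ (deg y * deg x') * (coord (m x x') a * coord (m y y') b)"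
proof -
  have "tensor_mult n deg' m' (\<lambda>p q. Q x p * Q y q) (\<lambda>r t. Q x' r * Q y' t) a b
      = (\<Sum>p<n. \<Sum>q<n. \<Sum>r<n. \<Sum>t<n. (-1) ^ (deg y * deg x') *
           ((Q x p * Q x' r * m' p r a) * (Q y q * Q y' t * m' q t b)))"
    unfolding tensor_mult_def
  proof (intro sum.cong refl)
    fix p q r t assume "q \<in> {..<n}" "r \<in> {..<n}"
    show "(-1) ^ (deg' q * deg' r) * (Q x p * Q y q) * (Q x' r * Q y' t) * m' p r a * m' q t b =
          (-1) ^ (deg y * deg x') * ((Q x p * Q x' r * m' p r a) * (Q y q * Q y' t * m' q t b))"
    proof (cases "Q y q = 0 \<or> Q x' r = 0")
      case False
      then have "deg' q = deg y" "deg' r = deg x'"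
        using Q_deg assms \<open>q \<in> {..<n}\<close> \<open>r \<in> {..<n}\<close> by auto
      then show ?thesis by (simp add: mult_ac)
    qed auto
  qed
  also have "\<dots> = (-1) ^ (deg y * deg x') * ((\<Sum>p<n. \<Sum>r<n. Q x p * Q x' r * m' p r a) *
                    (\<Sum>q<n. \<Sum>t<n. Q y q * Q y' t * m' q t b))"
    unfolding sum_product_double by (simp only: sum_distrib_left)
  also have "\<dots> = (-1) ^ (deg y * deg x') * (coord (m x x') a * coord (m y y') b)"
    using assms by (simp add: new_mult_contract)
  finally show ?thesis .
qed

lemma d'_eq: "d' i = (\<lambda>p q. \<Sum>x<n. \<Sum>y<n. vcomult (P i) x y * (Q x p * Q y q))"
  by (intro ext) (simp add: d'_def coord2_def mult.assoc)

lemma new_comult_mult: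
  assumes "a < n" "b < n"
  shows "(\<Sum>k<n. m' i j k * d' k a b) =
    (\<Sum>p<n. \<Sum>q<n. \<Sum>r<n. \<Sum>t<n. (-1) ^ (deg' q * deg' r) * d' i p q * d' j r t * m' p r a * m' q t b)"
proof -
  define A where "A = vcomult (P i)"
  define B where "B = vcomult (P j)"
  have "(\<Sum>k<n. m' i j k * d' k a b) = coord2 (vcomult (vmult (P i) (P j))) a b"
    unfolding m'_def d'_def by (rule coord2_vcomult_expand)
  also have "\<dots> = coord2 (tensor_mult n deg m A B) a b"
    unfolding A_def B_def by (intro coord2_cong) (simp add: vcomult_vmult)
  also have "\<dots> = (\<Sum>x<n. \<Sum>y<n. \<Sum>x'<n. \<Sum>y'<n.
      (-1) ^ (deg y * deg x') * (A x y * (B x' y' * (coord (m x x') a * coord (m y y') b))))"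
    unfolding tensor_mult_def[abs_def] by (simp add: mult.assoc coord2_sum coord2_scale coord2_tensor)
  also have "\<dots> = (\<Sum>x<n. \<Sum>y<n. \<Sum>x'<n. \<Sum>y'<n.
      A x y * (B x' y' * tensor_mult n deg' m' (\<lambda>p q. Q x p * Q y q) (\<lambda>r t. Q x' r * Q y' t) a b))"
    by (intro sum.cong refl) (simp add: new_tensor_mult_contract mult_ac)
  also have "\<dots> = tensor_mult n deg' m' (d' i) (d' j) a b"
    unfolding d'_eq A_def B_def
    by (simp add: tensor_mult_sum_left tensor_mult_scale_left tensor_mult_sum_right
        tensor_mult_scale_right sum_distrib_left)
  finally show ?thesis by (simp add: tensor_mult_def)
qed

lemma new_antipode_mult_contract_left:
  assumes "x < n" "y < n"
  shows "(\<Sum>p<n. \<Sum>q<n. Q x p * Q y q * coord (vmult (vantipode (P p)) (P q)) k)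
       = coord (\<lambda>z. \<Sum>r<n. s x r * m r y z) k"
proof -
  have "(\<Sum>p<n. \<Sum>q<n. Q x p * Q y q * coord (vmult (vantipode (P p)) (P q)) k)
      = coord (vmult (vantipode (\<lambda>z. \<Sum>p<n. Q x p * P p z)) (\<lambda>z. \<Sum>q<n. Q y q * P q z)) k"
    by (simp add: vantipode_sum vantipode_scale vmult_sum_left vmult_scale_left vmult_sum_right
        vmult_scale_right coord_sum coord_scale sum_distrib_left mult.assoc)
  also have "\<dots> = coord (vmult (vantipode (\<lambda>z. if x = z then 1 else 0)) (\<lambda>z. if y = z then 1 else 0)) k"
    using assms by (intro coord_cong vmult_cong vantipode_cong) (simp_all add: Q_P_inverse)
  also have "\<dots> = coord (\<lambda>z. \<Sum>r<n. s x r * m r y z) k"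
    using assms by (intro coord_cong) (simp add: vmult_delta_right vantipode_delta)
  finally show ?thesis .
qed

lemma new_antipode_mult_contract_right:
  assumes "x < n" "y < n"
  shows "(\<Sum>p<n. \<Sum>q<n. Q x p * Q y q * coord (vmult (P p) (vantipode (P q))) k)
       = coord (\<lambda>z. \<Sum>r<n. s y r * m x r z) k"
proof -
  have "(\<Sum>p<n. \<Sum>q<n. Q x p * Q y q * coord (vmult (P p) (vantipode (P q))) k)
      = coord (vmult (\<lambda>z. \<Sum>p<n. Q x p * P p z) (vantipode (\<lambda>z. \<Sum>q<n. Q y q * P q z))) k"
    by (simp add: vantipode_sum vantipode_scale vmult_sum_left vmult_scale_left vmult_sum_right
        vmult_scale_right coord_sum coord_scale sum_distrib_left mult.assoc)
  also have "\<dots> = coord (vmult (\<lambda>z. if x = z then 1 else 0) (vantipode (\<lambda>z. if y = z then 1 else 0))) k"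
    using assms by (intro coord_cong vmult_cong vantipode_cong) (simp_all add: Q_P_inverse)
  also have "\<dots> = coord (\<lambda>z. \<Sum>r<n. s y r * m x r z) k"
    using assms by (intro coord_cong) (simp add: vmult_delta_left vantipode_delta)
  finally show ?thesis .
qed

lemma new_antipode_left:
  assumes "k < n"
  shows "(\<Sum>p<n. \<Sum>q<n. \<Sum>r<n. d' i p q * s' p r * m' r q k) = c' i * u' k"
proof -
  define A where "A = vcomult (P i)"
  define T where "T p q = coord (vmult (vantipode (P p)) (P q)) k" for p q
  have "(\<Sum>p<n. \<Sum>q<n. \<Sum>r<n. d' i p q * s' p r * m' r q k) = (\<Sum>p<n. \<Sum>q<n. d' i p q * T p q)"
    unfolding s'_def m'_def T_def
    by (simp add: mult.assoc coord_vmult_expand_left flip: sum_distrib_left)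
  also have "\<dots> = (\<Sum>p<n. \<Sum>q<n. \<Sum>x<n. \<Sum>y<n. A x y * (Q x p * Q y q * T p q))"
    unfolding d'_eq A_def by (simp add: sum_distrib_right mult.assoc)
  also have "\<dots> = (\<Sum>x<n. \<Sum>y<n. \<Sum>p<n. \<Sum>q<n. A x y * (Q x p * Q y q * T p q))"
    by (subst sum_rotate4, subst sum_rotate4) (rule refl)
  also have "\<dots> = (\<Sum>x<n. \<Sum>y<n. A x y * (\<Sum>p<n. \<Sum>q<n. Q x p * Q y q * T p q))"
    by (simp add: sum_distrib_left)
  also have "\<dots> = (\<Sum>x<n. \<Sum>y<n. A x y * coord (\<lambda>z. \<Sum>r<n. s x r * m r y z) k)"
    unfolding T_def by (intro sum.cong refl) (simp add: new_antipode_mult_contract_left)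
  also have "\<dots> = coord (\<lambda>z. \<Sum>x<n. \<Sum>y<n. \<Sum>r<n. A x y * s x r * m r y z) k"
    by (simp add: coord_sum coord_scale mult.assoc sum_distrib_left)
  also have "\<dots> = coord (\<lambda>z. vcounit (P i) * u z) k"
    unfolding A_def by (intro coord_cong) (simp add: vantipode_left)
  finally show ?thesis by (simp add: coord_scale c'_def u'_def)
qed

lemma new_antipode_right:
  assumes "k < n"
  shows "(\<Sum>p<n. \<Sum>q<n. \<Sum>r<n. d' i p q * s' q r * m' p r k) = c' i * u' k"
proof -
  define A where "A = vcomult (P i)"
  define T where "T p q = coord (vmult (P p) (vantipode (P q))) k" for p q
  have "(\<Sum>p<n. \<Sum>q<n. \<Sum>r<n. d' i p q * s' q r * m' p r k) = (\<Sum>p<n. \<Sum>q<n. d' i p q * T p q)"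
    unfolding s'_def m'_def T_def
    by (simp add: mult.assoc coord_vmult_expand_right flip: sum_distrib_left)
  also have "\<dots> = (\<Sum>p<n. \<Sum>q<n. \<Sum>x<n. \<Sum>y<n. A x y * (Q x p * Q y q * T p q))"
    unfolding d'_eq A_def by (simp add: sum_distrib_right mult.assoc)
  also have "\<dots> = (\<Sum>x<n. \<Sum>y<n. \<Sum>p<n. \<Sum>q<n. A x y * (Q x p * Q y q * T p q))"
    by (subst sum_rotate4, subst sum_rotate4) (rule refl)
  also have "\<dots> = (\<Sum>x<n. \<Sum>y<n. A x y * (\<Sum>p<n. \<Sum>q<n. Q x p * Q y q * T p q))"
    by (simp add: sum_distrib_left)
  also have "\<dots> = (\<Sum>x<n. \<Sum>y<n. A x y * coord (\<lambda>z. \<Sum>r<n. s y r * m x r z) k)"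
    unfolding T_def by (intro sum.cong refl) (simp add: new_antipode_mult_contract_right)
  also have "\<dots> = coord (\<lambda>z. \<Sum>x<n. \<Sum>y<n. \<Sum>r<n. A x y * s y r * m x r z) k"
    by (simp add: coord_sum coord_scale mult.assoc sum_distrib_left)
  also have "\<dots> = coord (\<lambda>z. vcounit (P i) * u z) k"
    unfolding A_def by (intro coord_cong) (simp add: vantipode_right)
  finally show ?thesis by (simp add: coord_scale c'_def u'_def)
qed

lemma new_mult_deg:
  assumes "a < n" "b < n" "r < n" "m' a b r \<noteq> 0"
  shows "deg' r = (deg' a + deg' b) mod 2"
proof -
  obtain x where x: "x < n" "vmult (P a) (P b) x * Q x r \<noteq> 0"
    using assms(4) unfolding m'_def coord_def by (auto elim: sum.not_neutral_contains_not_neutral)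
  then obtain p q where pq: "p < n" "q < n" "P a p * P b q * m p q x \<noteq> 0"
    unfolding vmult_def by (auto elim!: sum.not_neutral_contains_not_neutral)
  have "deg' r = deg x" using Q_deg x assms by auto
  moreover have "deg' a = deg p" "deg' b = deg q" using P_deg pq assms by auto
  moreover have "deg x = (deg p + deg q) mod 2" using mult_deg pq x by auto
  ultimately show ?thesis by simp
qed

lemma new_unit_deg:
  assumes "r < n" "u' r \<noteq> 0"
  shows "deg' r = 0"
proof -
  obtain x where "x < n" "u x * Q x r \<noteq> 0"
    using assms unfolding u'_def coord_def by (auto elim!: sum.not_neutral_contains_not_neutral)
  then show ?thesis using Q_deg unit_deg assms by force
qed

lemma new_comult_deg:
  assumes "a < n" "x < n" "y < n" "d' a x y \<noteq> 0"
  shows "deg' a = (deg' x + deg' y) mod 2"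
proof -
  obtain x' y' where x'y': "x' < n" "y' < n" "vcomult (P a) x' y' * Q x' x * Q y' y \<noteq> 0"
    using assms(4) unfolding d'_def coord2_def by (auto elim!: sum.not_neutral_contains_not_neutral)
  then obtain i where i: "i < n" "P a i * d i x' y' \<noteq> 0"
    unfolding vcomult_def by (auto elim!: sum.not_neutral_contains_not_neutral)
  have "deg' x = deg x'" "deg' y = deg y'" using Q_deg x'y' assms by auto
  moreover have "deg' a = deg i" using P_deg i assms by auto
  moreover have "deg i = (deg x' + deg y') mod 2" using comult_deg i x'y' by auto
  ultimately show ?thesis by simp
qed

lemma new_counit_deg:
  assumes "a < n" "c' a \<noteq> 0"
  shows "deg' a = 0"
proof -
  obtain p where "p < n" "P a p * c p \<noteq> 0"
    using assms unfolding c'_def vcounit_def by (auto elim!: sum.not_neutral_contains_not_neutral)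
  then show ?thesis using P_deg counit_deg assms by force
qed

lemma new_antipode_deg:
  assumes "a < n" "b < n" "s' a b \<noteq> 0"
  shows "deg' a = deg' b"
proof -
  obtain x where x: "x < n" "vantipode (P a) x * Q x b \<noteq> 0"
    using assms unfolding s'_def coord_def by (auto elim!: sum.not_neutral_contains_not_neutral)
  then obtain p where p: "p < n" "P a p * s p x \<noteq> 0"
    unfolding vantipode_def by (auto elim!: sum.not_neutral_contains_not_neutral)
  have "deg' b = deg x" using Q_deg x assms by auto
  moreover have "deg' a = deg p" using P_deg p assms by auto
  moreover have "deg p = deg x" using antipode_deg p x by auto
  ultimately show ?thesis by simp
qed

theorem hopf_sc_new_basis: "hopf_sc n deg' m' u' d' c' s'"
  by unfold_locales
    (rule deg'_less_2 new_mult_deg new_unit_deg new_comult_deg new_counit_deg new_antipode_deg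
      new_mult_assoc new_unit_mult new_mult_unit new_comult_coassoc new_counit_comult_left
      new_counit_comult_right new_comult_mult new_comult_unit new_counit_mult new_counit_unit
      new_antipode_left new_antipode_right; assumption)+

end

section \<open>Normalised bases\<close>

locale normalized_hopf_sc = hopf_sc +
  assumes unit_eq_e0: "k < n \<Longrightarrow> u k = (if k = 0 then 1 else 0)"
    and counit_eq_e0: "k < n \<Longrightarrow> c k = (if k = 0 then 1 else 0)"
begin

lemma n_pos: "0 < n"
  using counit_unit by (cases n) auto

lemma sum_unit: "(\<Sum>l<n. u l * f l) = f 0"
proof -
  have "(\<Sum>l<n. u l * f l) = (\<Sum>l<n. if l = 0 then f l else 0)"
    by (rule sum.cong) (simp_all add: unit_eq_e0)
  then show ?thesis by (simp add: n_pos)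
qed

lemma sum_counit: "(\<Sum>l<n. f l * c l) = f 0"
proof -
  have "(\<Sum>l<n. f l * c l) = (\<Sum>l<n. if l = 0 then f l else 0)"
    by (rule sum.cong) (simp_all add: counit_eq_e0)
  then show ?thesis by (simp add: n_pos)
qed

lemma mult_e0_left: "\<lbrakk>j < n; k < n\<rbrakk> \<Longrightarrow> m 0 j k = (if j = k then 1 else 0)"
  using unit_mult by (simp add: sum_unit)

lemma mult_e0_right: "\<lbrakk>j < n; k < n\<rbrakk> \<Longrightarrow> m j 0 k = (if j = k then 1 else 0)"
  using mult_unit by (simp add: sum_unit)

lemma comult_e0_left: "\<lbrakk>i < n; k < n\<rbrakk> \<Longrightarrow> d i 0 k = (if i = k then 1 else 0)"
  using counit_comult_left by (simp add: sum_counit)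

lemma comult_e0_right: "\<lbrakk>i < n; j < n\<rbrakk> \<Longrightarrow> d i j 0 = (if i = j then 1 else 0)"
  using counit_comult_right by (simp add: sum_counit)

lemma mult_coeff_e0: "\<lbrakk>i < n; j < n\<rbrakk> \<Longrightarrow> m i j 0 = c i * c j"
  using counit_mult by (simp add: sum_counit)

lemma comult_e0: "\<lbrakk>a < n; b < n\<rbrakk> \<Longrightarrow> d 0 a b = u a * u b"
  using comult_unit by (simp add: sum_unit)

lemmas structure_constant_simps =
  mult_eq_0_if_deg comult_eq_0_if_deg antipode_eq_0_if_deg mult_e0_left mult_e0_right
  comult_e0_left comult_e0_right mult_coeff_e0 comult_e0 unit_eq_e0 counit_eq_e0

end

section \<open>Dimension three\<close>

lemma sum_lessThan_3: "(\<Sum>l<3::nat. f l) = f 0 + f 1 + f 2"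
proof -
  have "{..<3::nat} = {0, 1, 2}" by auto
  then show ?thesis by (simp add: add_ac)
qed

lemma sum_lessThan_3_distinct:
  assumes "i < 3" "j < 3" "k < 3" "i \<noteq> j" "i \<noteq> k" "j \<noteq> k"
  shows "(\<Sum>l<3::nat. f l) = f i + f j + f k"
proof -
  have "{..<3::nat} = {i, j, k}" using assms by auto
  then show ?thesis using assms by (simp add: add_ac)
qed

lemma hopf_sc_3_normalized_basis:
  fixes m :: "nat \<Rightarrow> nat \<Rightarrow> nat \<Rightarrow> 'k::field"
  assumes hopf: "hopf_sc 3 deg m u d c s"
    and ijk: "i < 3" "j < 3" "k < 3" "i \<noteq> j" "i \<noteq> k" "j \<noteq> k"
    and degs: "deg i = 0" "deg k = 1"
  obtains m' :: "nat \<Rightarrow> nat \<Rightarrow> nat \<Rightarrow> 'k" and u' d' c' s' where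
    "normalized_hopf_sc 3 (\<lambda>a. if a = 0 then 0 else if a = 1 then deg j else 1) m' u' d' c' s'"
proof -
  interpret hopf_sc 3 deg m u d c s by (fact hopf)
  note sum3 = sum_lessThan_3_distinct[OF ijk]
  have uk: "u k = 0" and ck: "c k = 0" using unit_deg[of k] counit_deg[of k] ijk degs by auto
  have uc: "u i * c i + u j * c j = 1" using counit_unit uk by (simp add: sum3)
  txt \<open>New basis \<open>1 = \<Sum> u\<^sub>p e\<^sub>p\<close>, \<open>\<epsilon>(e\<^sub>j) e\<^sub>i - \<epsilon>(e\<^sub>i) e\<^sub>j \<in> ker \<epsilon>\<close> and \<open>e\<^sub>k\<close>; it is
    invertible because \<open>\<epsilon>(1) = u\<^sub>i \<epsilon>(e\<^sub>i) + u\<^sub>j \<epsilon>(e\<^sub>j) = 1\<close>.\<close>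
  define P where "P a p =
    (if a = 0 then u p
     else if a = 1 then (if p = i then c j else if p = j then - c i else 0)
     else if p = k then 1 else 0)" for a p :: nat
  define Q where "Q p a =
    (if a = 0 then c p
     else if a = 1 then (if p = i then u j else if p = j then - u i else 0)
     else if p = k then 1 else 0)" for p a :: nat
  define deg' where "deg' = (\<lambda>a::nat. if a = 0 then 0 else if a = 1 then deg j else 1)"
  have ijk': "j \<noteq> i" "k \<noteq> i" "k \<noteq> j" using ijk by auto
  interpret homogeneous_basis_change 3 deg m u d c s deg' P Q
  proof
    fix a b :: nat assume "a < 3" "b < 3"
    then show "(\<Sum>l<3. P a l * Q l b) = (if a = b then 1 else 0)"
      using uk ck uc ijk ijk' by (auto simp: sum3 P_def Q_def algebra_simps)
    from \<open>a < 3\<close> \<open>b < 3\<close> have "a = i \<or> a = j \<or> a = k" "b = i \<or> b = j \<or> b = k"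
      using ijk by auto
    then show "(\<Sum>l<3. Q a l * P l b) = (if a = b then 1 else 0)"
      using uk ck uc ijk ijk' by (auto simp: sum_lessThan_3 P_def Q_def algebra_simps)
  next
    fix a p :: nat assume "a < 3" "p < 3" "P a p \<noteq> 0"
    then show "deg' a = deg p"
      using unit_deg[of p] counit_deg[of j] degs ijk by (auto simp: P_def deg'_def split: if_splits)
  next
    fix p a :: nat assume "p < 3" "a < 3" "Q p a \<noteq> 0"
    then show "deg' a = deg p"
      using counit_deg[of p] unit_deg[of j] degs ijk by (auto simp: Q_def deg'_def split: if_splits)
  next
    fix a :: nat show "deg' a < 2" using deg_less_2 \<open>j < 3\<close> by (simp add: deg'_def)
  qed
  have "normalized_hopf_sc 3 deg' m' u' d' c' s'"
  proof (intro normalized_hopf_sc.intro normalized_hopf_sc_axioms.intro)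
    show "hopf_sc 3 deg' m' u' d' c' s'" by (rule hopf_sc_new_basis)
  next
    fix r :: nat assume "r < 3"
    then have "r = 0 \<or> r = 1 \<or> r = 2" by auto
    then show "u' r = (if r = 0 then 1 else 0)" "c' r = (if r = 0 then 1 else 0)"
      using uk ck uc ijk ijk'
      by (auto simp: u'_def c'_def coord_def vcounit_def sum3 P_def Q_def algebra_simps)
  qed
  then show thesis unfolding deg'_def by (rule that)
qed

text \<open>Below, the simplifier rewrites \<open>1 :: nat\<close> to \<open>Suc 0\<close>, so the degree hypotheses are
  used in \<open>simplified\<close> form; \<open>simplified\<close> also discharges the premises \<open>i < 3\<close> of the
  instantiated axioms, without which their evaluation is very slow.\<close>

lemma normalized_hopf_sc_even_odd_odd_impossible:
  assumes "normalized_hopf_sc 3 deg m u d c s" "deg 0 = 0" "deg 1 = 1" "deg 2 = 1"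
  shows False
proof -
  interpret normalized_hopf_sc 3 deg m u d c s by fact
  show False
    using comult_mult[of 1 2 1 2, simplified]
    by (simp add: assms(2-)[simplified] sum_lessThan_3 structure_constant_simps)
qed

text \<open>With \<open>x = e\<^sub>1\<close> even and \<open>z = e\<^sub>2\<close> odd: \<open>x\<^sup>2 = \<alpha> x\<close>, \<open>x z = a z\<close>, \<open>z x = b z\<close>,
  \<open>z\<^sup>2 = \<gamma> x\<close>, \<open>\<Delta> x = x\<otimes>1 + 1\<otimes>x + \<delta> x\<otimes>x + \<nu> z\<otimes>z\<close>,
  \<open>\<Delta> z = z\<otimes>1 + 1\<otimes>z + g x\<otimes>z + h z\<otimes>x\<close>, \<open>S x = s1 x\<close> and \<open>S z = \<sigma> z\<close>.\<close>

lemma even_even_odd_relations_inconsistent: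
  fixes \<alpha> a b \<gamma> \<delta> \<nu> g h s1 \<sigma> :: "'k::field_char_0"
  assumes assoc_xxz: "\<alpha> * a = a * a"
    and assoc_xzz: "a * \<gamma> = \<alpha> * \<gamma>"
    and assoc_zxz: "b * \<gamma> = a * \<gamma>"
    and coassoc_z: "\<delta> * g = g * g"
    and comult_xx: "3 * (\<delta> * \<alpha>) + (2 + (\<delta> * \<delta> * \<alpha> * \<alpha> - \<nu> * \<nu> * \<gamma> * \<gamma>)) = 0"
    and comult_xz: "- 1 - \<delta> * g * \<alpha> * a - \<delta> * a + \<nu> * h * b * \<gamma> + \<nu> * \<gamma> - g * \<alpha> = 0"
    and comult_zz: "\<nu> * \<gamma> + g * a - g * b - h * a + h * b = 0"
    and antipode_x: "\<delta> * \<alpha> * s1 + \<nu> * \<gamma> * \<sigma> + 1 + s1 = 0"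
  shows False
proof -
  have g01: "g = 0 \<or> g = \<delta>"
  proof -
    have "g * (\<delta> - g) = 0" using coassoc_z by algebra
    then show ?thesis by auto
  qed
  show False
  proof (cases "\<gamma> = 0")
    case True
    have q: "(\<delta> * \<alpha> + 1) * (\<delta> * \<alpha> + 2) = 0" using comult_xx True by algebra
    have "s1 * (\<delta> * \<alpha> + 1) = -1" using antipode_x True by algebra
    then have "\<delta> * \<alpha> + 1 \<noteq> 0" by auto
    have "\<delta> * \<alpha> + 2 = 0" using q \<open>\<delta> * \<alpha> + 1 \<noteq> 0\<close> by simp
    then have da: "\<delta> * \<alpha> = -2" by algebra
    have "(1 + g * \<alpha>) * (1 + \<delta> * a) = 0" using comult_xz True by algebra
    moreover have "1 + g * \<alpha> \<noteq> 0"
    proof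
      assume "1 + g * \<alpha> = 0"
      with g01 da show False by auto
    qed
    ultimately have db: "\<delta> * a = -1" by (simp add: add_eq_0_iff)
    have "(\<delta> * \<alpha>) * (\<delta> * a) = (\<delta> * a) * (\<delta> * a)"
      using assoc_xxz by (metis mult.assoc mult.left_commute)
    with da db show False by simp
  next
    case False
    have aa: "a = \<alpha>" using assoc_xzz False by simp
    have bb: "b = a" using assoc_zxz False by simp
    have "\<nu> * \<gamma> = 0" using comult_zz aa bb by simp
    then have nu: "\<nu> = 0" using False by simp
    have q: "(\<delta> * \<alpha> + 1) * (\<delta> * \<alpha> + 2) = 0" using comult_xx nu by algebra
    have "s1 * (\<delta> * \<alpha> + 1) = -1" using antipode_x nu by algebra
    then have "\<delta> * \<alpha> + 1 \<noteq> 0" by auto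
    have "\<delta> * \<alpha> + 2 = 0" using q \<open>\<delta> * \<alpha> + 1 \<noteq> 0\<close> by simp
    then have da: "\<delta> * \<alpha> = -2" by algebra
    have "- 1 - (\<delta> * \<alpha>) * (g * \<alpha>) - \<delta> * \<alpha> - g * \<alpha> = 0"
      using comult_xz nu aa by algebra
    with da have "1 + g * \<alpha> = 0" by algebra
    with g01 da show False by auto
  qed
qed

lemma normalized_hopf_sc_even_even_odd_impossible:
  fixes m :: "nat \<Rightarrow> nat \<Rightarrow> nat \<Rightarrow> 'k::field_char_0"
  assumes "normalized_hopf_sc 3 deg m u d c s" "deg 0 = 0" "deg 1 = 0" "deg 2 = 1"
  shows False
proof -
  interpret normalized_hopf_sc 3 deg m u d c s by fact
  note eval = assms(2-)[simplified] sum_lessThan_3 structure_constant_simps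
  have antipode_e0: "s 0 0 = 1" "s 0 1 = 0" "s 1 0 = 0"
    using antipode_left[of 0 0, simplified] antipode_left[of 0 1, simplified]
      antipode_left[of 1 0, simplified]
    by (simp_all add: eval)
  have assoc_xxz: "m 1 1 1 * m 1 2 2 = m 1 2 2 * m 1 2 2"
    using mult_assoc[of 1 1 2 2, simplified] by (simp add: eval)
  have assoc_xzz: "m 1 2 2 * m 2 2 1 = m 1 1 1 * m 2 2 1"
    using mult_assoc[of 1 2 2 1, simplified] by (simp add: eval)
  have assoc_zxz: "m 2 1 2 * m 2 2 1 = m 1 2 2 * m 2 2 1"
    using mult_assoc[of 2 1 2 1, simplified] by (simp add: eval)
  have coassoc_z: "d 1 1 1 * d 2 1 2 = d 2 1 2 * d 2 1 2"
    using comult_coassoc[of 2 1 1 2, simplified] by (simp add: eval)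
  have comult_xx: "3 * (d 1 1 1 * m 1 1 1) + (2 + (d 1 1 1 * d 1 1 1 * m 1 1 1 * m 1 1 1
      - d 1 2 2 * d 1 2 2 * m 2 2 1 * m 2 2 1)) = 0"
    using comult_mult[of 1 1 1 1, simplified] by (simp add: eval)
  have comult_xz: "- 1 - d 1 1 1 * d 2 1 2 * m 1 1 1 * m 1 2 2 - d 1 1 1 * m 1 2 2
      + d 1 2 2 * d 2 2 1 * m 2 1 2 * m 2 2 1 + d 1 2 2 * m 2 2 1 - d 2 1 2 * m 1 1 1 = 0"
    using comult_mult[of 1 2 1 2, simplified] by (simp add: eval) algebra
  have comult_zz: "d 1 2 2 * m 2 2 1 + d 2 1 2 * m 1 2 2 - d 2 1 2 * m 2 1 2 - d 2 2 1 * m 1 2 2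
      + d 2 2 1 * m 2 1 2 = 0"
    using comult_mult[of 2 2 2 2, simplified] by (simp add: eval) algebra
  have antipode_x: "d 1 1 1 * m 1 1 1 * s 1 1 + d 1 2 2 * m 2 2 1 * s 2 2 + 1 + s 1 1 = 0"
    using antipode_left[of 1 1, simplified] antipode_e0 by (simp add: eval) algebra
  show False
    using even_even_odd_relations_inconsistent[OF assoc_xxz assoc_xzz assoc_zxz coassoc_z
        comult_xx comult_xz comult_zz antipode_x] .
qed

theorem theorem3p6:
  fixes deg :: "nat \<Rightarrow> nat"
    and m d :: "nat \<Rightarrow> nat \<Rightarrow> nat \<Rightarrow> 'k::field_char_0"
    and u c :: "nat \<Rightarrow> 'k"
    and s :: "nat \<Rightarrow> nat \<Rightarrow> 'k"
  assumes "alg_closed_field TYPE('k)"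
    and "hopf_superalgebra_sc 3 deg m u d c s"
  shows "\<not> (\<exists>i<3. deg i = 1)"
proof
  assume "\<exists>i<3. deg i = 1"
  then obtain k where k: "k < 3" "deg k = 1" by blast
  interpret hopf_sc 3 deg m u d c s
    using assms(2) by (rule hopf_sc_if_hopf_superalgebra_sc)
  obtain i where i: "i < 3" "deg i = 0" using exists_even_index by blast
  define j where "j = 3 - i - k"
  have "i \<noteq> k" using i k by auto
  then have ijk: "j < 3" "i \<noteq> j" "i \<noteq> k" "j \<noteq> k"
    using i(1) k(1) unfolding j_def by presburger+
  obtain m' :: "nat \<Rightarrow> nat \<Rightarrow> nat \<Rightarrow> 'k" and u' d' c' s' where normal:
    "normalized_hopf_sc 3 (\<lambda>a. if a = 0 then 0 else if a = 1 then deg j else 1) m' u' d' c' s'"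
    by (rule hopf_sc_3_normalized_basis[OF hopf_sc_axioms i(1) ijk(1) k(1) ijk(2-4) i(2) k(2)])
  show False
  proof (cases "deg j = 0")
    case True
    show False by (rule normalized_hopf_sc_even_even_odd_impossible[OF normal]) (simp_all add: True)
  next
    case False
    then have "deg j = 1" using deg_less_2[OF \<open>j < 3\<close>] by simp
    show False by (rule normalized_hopf_sc_even_odd_odd_impossible[OF normal]) (simp_all add: \<open>deg j = 1\<close>)
  qed
qed

end
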